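(* Let $\mathcal M\otimes\mathcal A_\varphi$ be the product of a labelled MDP $\mathcal M=(S,\mathit{Act},P,\mu)$ with labelling $L$ and a deterministic Streett automaton $\mathcal A_\varphi=(Q,2^{AP},\delta,q_0,\mathit{Acc})$, with state space $S\times Q$. Let $\pi$ be a stationary policy on the product, $0<\gamma<1$, $(A,B)\in\mathit{Acc}$, and $I\subseteq S\times Q$ measurable. Assume: (1) $I$ is absorbing under $\pi$ and $\mu^\otimes(I)=1$; (2) there is $\bar H<\infty$ with $\mathbb{E}_\pi[\mathrm{step}^{(S\times A,S\times B)}\mid S_0=x]\le\bar H$ for all $x\in I$; (3) the reward is $r^\otimes((s,q),a,(s',q'))=r_B\mathbf 1_{\{(s,q)\in S\times B\}}-r_{A\setminus B}\mathbf 1_{\{(s,q)\in(S\times A)\setminus(S\times B)\}}$ with $r_B,r_{A\setminus B}>0$ and $\frac{r_B}{r_{A\setminus B}}\ge\frac1{1-\gamma}\left(\frac1{\gamma^{\bar H+1}}-1\right)$; (4) the discount is state-dependent: $\Gamma(s,q)=\gamma$ if $q\in A\cup B$ and $\Gamma(s,q)=1$ otherwise. Then $W(s,q):=C-V^\pi(s,q)$ on $I$, with $C:=\frac{r_B}{1-\gamma}$, is a Streett supermartingale for $(S\times A,S\times B)$ on $\mathcal M\otimes\mathcal A_\varphi$ with supporting invariant $I$.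
   Context: An MDP $(S,\mathit{Act},P,\mu)$ has state/action spaces finite/countable or Borel subsets of Euclidean space, a stochastic kernel $P$ on $S$ given $S\times\mathit{Act}$ and initial distribution $\mu$. A labelled MDP additionally has finite $AP$ and $L:S\to2^{AP}$. A deterministic Streett automaton is $(Q,2^{AP},\delta,q_0,\mathit{Acc})$ with finite $Q$, $\delta:Q\times2^{AP}\to Q$, $q_0\in Q$, $\mathit{Acc}$ a finite set of pairs $(A_i,B_i)$ of subsets of $Q$. The product MDP has state space $S\times Q$, transitions from $(s,q)$ under $a$ to $(s',\delta(q,L(s)))$ with $s'\sim P(\cdot\mid s,a)$, initial distribution $\mu^\otimes=\mu\otimes\delta_{q_0}$. A stationary policy $\pi$ is a stochastic kernel on actions given states; $\Pr_\pi(\cdot\mid S_0=x)$, $\mathbb{E}_\pi[\cdot\mid S_0=x]$ refer to the product process started at $x$. A measurable set $X$ is absorbing if $\Pr_\pi(S_1\in X\mid S_0=x)=1$ for all $x\in X$. For a run $\rho=(x_0,x_1,\dots)$ and sets $A',B'$: $\mathrm{step}^{(A',B')}(\rho):=|\{i:0\le i<\min\{j\ge0:x_j\in B'\},\ x_i\in A'\}|$ ($\min\emptyset=\infty$); $N^U_t(\rho):=|\{i:0\le i<t,\ x_i\in U\}|$. With discount $\Gamma$, $V^\pi(x)=\mathbb{E}_\pi[\sum_{t\ge0}\gamma^{N_t^{S\times(A\cup B)}}r^\otimes(S_t,A_t,S_{t+1})\mid S_0=x]$. Streett supermartingale: for measurable $A',B',I$, $W:I\to[0,\infty)$ is a Streett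 supermartingale for $(A',B')$ with supporting invariant $I$ if $\mu^\otimes(I)=1$, $\Pr_\pi(S_1\in I\mid S_0=x)=1$ for $x\in I$, there is $\varepsilon>0$ with $\mathbb{E}_\pi[W(S_1)\mid S_0=x]\le W(x)-\varepsilon$ for $x\in(A'\setminus B')\cap I$, and $\mathbb{E}_\pi[W(S_1)\mid S_0=x]\le W(x)$ for $x\in I\setminus(A'\cup B')$. *)

theory Defs
  imports "HOL-Probability.Probability"
begin

definition labelled_mdp ::
  "'s measure \<Rightarrow> 'act measure \<Rightarrow> ('s \<times> 'act \<Rightarrow> 's measure) \<Rightarrow> 's measure
   \<Rightarrow> 'ap set \<Rightarrow> ('s \<Rightarrow> 'ap set) \<Rightarrow> bool" where
  "labelled_mdp SM AM P mu AP L \<longleftrightarrow>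
     P \<in> measurable (SM \<Otimes>\<^sub>M AM) (prob_algebra SM) \<and>
     prob_space mu \<and> sets mu = sets SM \<and>
     finite AP \<and> L \<in> measurable SM (count_space (Pow AP))"

definition det_streett ::
  "'q set \<Rightarrow> 'ap set \<Rightarrow> ('q \<Rightarrow> 'ap set \<Rightarrow> 'q) \<Rightarrow> 'q \<Rightarrow> ('q set \<times> 'q set) set \<Rightarrow> bool" where
  "det_streett Q AP delta q0 Acc \<longleftrightarrow>
     finite Q \<and> q0 \<in> Q \<and> (\<forall>q\<in>Q. \<forall>l\<in>Pow AP. delta q l \<in> Q) \<and>
     finite Acc \<and> (\<forall>(A, B)\<in>Acc. A \<subseteq> Q \<and> B \<subseteq> Q)"

definition prod_space :: "'s measure \<Rightarrow> 'q set \<Rightarrow> ('s \<times> 'q) measure" where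
  "prod_space SM Q = SM \<Otimes>\<^sub>M count_space Q"

definition prod_kernel ::
  "'s measure \<Rightarrow> 'q set \<Rightarrow> ('s \<Rightarrow> 'ap set) \<Rightarrow> ('q \<Rightarrow> 'ap set \<Rightarrow> 'q)
   \<Rightarrow> ('s \<times> 'act \<Rightarrow> 's measure) \<Rightarrow> ('s \<times> 'q) \<times> 'act \<Rightarrow> ('s \<times> 'q) measure" where
  "prod_kernel SM Q L delta P = (\<lambda>((s, q), a).
     distr (P (s, a)) (prod_space SM Q) (\<lambda>s'. (s', delta q (L s))))"

definition prod_init :: "'s measure \<Rightarrow> 'q set \<Rightarrow> 'q \<Rightarrow> 's measure \<Rightarrow> ('s \<times> 'q) measure" where
  "prod_init SM Q q0 mu = distr mu (prod_space SM Q) (\<lambda>s. (s, q0))"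

definition stationary_policy :: "'x measure \<Rightarrow> 'act measure \<Rightarrow> ('x \<Rightarrow> 'act measure) \<Rightarrow> bool" where
  "stationary_policy X AM pol \<longleftrightarrow> pol \<in> measurable X (prob_algebra AM)"

definition St :: "nat \<Rightarrow> ('x \<times> 'act) stream \<Rightarrow> 'x" where
  "St t \<omega> = fst (\<omega> !! t)"

definition At :: "nat \<Rightarrow> ('x \<times> 'act) stream \<Rightarrow> 'act" where
  "At t \<omega> = snd (\<omega> !! t)"

text \<open>This fixed-point equation (together with being a measurable
  probability kernel) determines Pr uniquely (Ionescu-Tulcea).\<close>
definition process_law ::
  "'x measure \<Rightarrow> 'act measure \<Rightarrow> ('x \<times> 'act \<Rightarrow> 'x measure) \<Rightarrow> ('x \<Rightarrow> 'act measure)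
   \<Rightarrow> ('x \<Rightarrow> ('x \<times> 'act) stream measure) \<Rightarrow> bool" where
  "process_law X AM K pol Pr \<longleftrightarrow>
     Pr \<in> measurable X (prob_algebra (stream_space (X \<Otimes>\<^sub>M AM))) \<and>
     (\<forall>x\<in>space X. Pr x =
        pol x \<bind> (\<lambda>a. K (x, a) \<bind>
          (\<lambda>x'. distr (Pr x') (stream_space (X \<Otimes>\<^sub>M AM)) (\<lambda>\<omega>. (x, a) ## \<omega>))))"

definition absorbing :: "'x measure \<Rightarrow> ('x \<Rightarrow> ('x \<times> 'act) stream measure) \<Rightarrow> 'x set \<Rightarrow> bool" where
  "absorbing X Pr Y \<longleftrightarrow> Y \<in> sets X \<and>
     (\<forall>x\<in>Y. measure (Pr x) {\<omega> \<in> space (Pr x). St 1 \<omega> \<in> Y} = 1)"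

text \<open>step^(A',B')(rho) = |{i. 0 \<le> i < min{j. x_j \<in> B'}, x_i \<in> A'}|, with min {} = infinity;
  valued in [0, infinity].\<close>
definition step_count :: "'x set \<Rightarrow> 'x set \<Rightarrow> 'x stream \<Rightarrow> ennreal" where
  "step_count A' B' \<rho> =
     (let T = {i. (\<forall>j\<le>i. \<rho> !! j \<notin> B') \<and> \<rho> !! i \<in> A'}
      in if finite T then of_nat (card T) else \<infinity>)"

definition N_count :: "'x set \<Rightarrow> nat \<Rightarrow> 'x stream \<Rightarrow> nat" where
  "N_count U t \<rho> = card {i. i < t \<and> \<rho> !! i \<in> U}"

text \<open>With Gam = gamma on S x (A \<union> B) and 1 elsewhere, the discount factor
  prod_{i<t} Gam(S_i) equals gamma ^ N_t^{S x (A \<union> B)}.\<close>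
definition value_fun ::
  "('x \<Rightarrow> ('x \<times> 'act) stream measure) \<Rightarrow> ('x \<Rightarrow> real) \<Rightarrow> ('x \<Rightarrow> 'act \<Rightarrow> 'x \<Rightarrow> real)
   \<Rightarrow> 'x \<Rightarrow> real" where
  "value_fun Pr Gam r x =
     (\<integral>\<omega>. (\<Sum>t. (\<Prod>i<t. Gam (St i \<omega>)) * r (St t \<omega>) (At t \<omega>) (St (Suc t) \<omega>)) \<partial>Pr x)"

text \<open>W : I \<rightarrow> [0, \<infinity>) is a Streett supermartingale for (A', B') with supporting invariant I
  (w.r.t. the process laws Pr and the initial distribution mu0). Only the values of W on
  I matter. Expectations of the nonnegative W(S_1) are taken in [0, \<infinity>].\<close>
definition streett_supermartingale ::
  "('x \<Rightarrow> ('x \<times> 'act) stream measure) \<Rightarrow> 'x measure \<Rightarrow> 'x set \<Rightarrow> 'x set \<Rightarrow> 'x set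
   \<Rightarrow> ('x \<Rightarrow> real) \<Rightarrow> bool" where
  "streett_supermartingale Pr mu0 A' B' I W \<longleftrightarrow>
     (\<forall>x\<in>I. 0 \<le> W x) \<and>
     measure mu0 I = 1 \<and>
     (\<forall>x\<in>I. measure (Pr x) {\<omega> \<in> space (Pr x). St 1 \<omega> \<in> I} = 1) \<and>
     (\<exists>\<epsilon>>0. \<forall>x\<in>(A' - B') \<inter> I.
        (\<integral>\<^sup>+\<omega>. ennreal (W (St 1 \<omega>)) \<partial>Pr x) + ennreal \<epsilon> \<le> ennreal (W x)) \<and>
     (\<forall>x\<in>I - (A' \<union> B').
        (\<integral>\<^sup>+\<omega>. ennreal (W (St 1 \<omega>)) \<partial>Pr x) \<le> ennreal (W x))"

end

theory Submission
  imports Defs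
begin

(* Along every path the discounted return lies between -rAB/(1 - gamma) and rB/(1 - gamma), and
   peeling off the first step gives the Bellman equation V x = r x + Gam x * E[V S_1 | S_0 = x].
   Hence W = rB/(1 - gamma) - V is nonnegative, E[W S_1] = W x off A \<union> B, and on A - B
   W x - E[W S_1] = (1 - gamma)/gamma * (V x + rAB/(1 - gamma)).
   A path that visits A fewer than N times before reaching B has return at least
   rAB gamma^N - rAB/(1 - gamma), so Markov's inequality applied to the bound Hbar on the expected
   number of such visits, with N > 2 Hbar, gives V x + rAB/(1 - gamma) >= rAB gamma^N / 2
   uniformly on I: this is the strict decrease. *)

section \<open>Discounted returns along a path\<close>

definition discount :: "real \<Rightarrow> 'x set \<Rightarrow> 'x stream \<Rightarrow> nat \<Rightarrow> real" where
  "discount g U xs t = (\<Prod>i<t. if xs !! i \<in> U then g else 1)"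

definition streett_reward :: "real \<Rightarrow> real \<Rightarrow> 'x set \<Rightarrow> 'x set \<Rightarrow> 'x \<Rightarrow> real" where
  "streett_reward rB rAB A B y = rB * indicator B y - rAB * indicator (A - B) y"

definition streett_return :: "real \<Rightarrow> real \<Rightarrow> real \<Rightarrow> 'x set \<Rightarrow> 'x set \<Rightarrow> 'x stream \<Rightarrow> real" where
  "streett_return g rB rAB A B xs =
     (\<Sum>t. discount g (A \<union> B) xs t * streett_reward rB rAB A B (xs !! t))"

lemma discount_0 [simp]: "discount g U xs 0 = 1"
  by (simp add: discount_def)

lemma discount_Suc: "discount g U xs (Suc t) = discount g U xs t * (if xs !! t \<in> U then g else 1)"
  by (simp add: discount_def)

lemma discount_Suc_stl:
  "discount g U xs (Suc t) = (if shd xs \<in> U then g else 1) * discount g U (stl xs) t"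
  unfolding discount_def prod.lessThan_Suc_shift by simp

lemma N_count_Suc:
  "N_count U (Suc t) xs = N_count U t xs + (if xs !! t \<in> U then 1 else 0)"
proof -
  have "{i. i < Suc t \<and> xs !! i \<in> U} =
      {i. i < t \<and> xs !! i \<in> U} \<union> (if xs !! t \<in> U then {t} else {})"
    by (auto simp: less_Suc_eq)
  then show ?thesis
    by (simp add: N_count_def)
qed

lemma discount_eq_power_N_count: "discount g U xs t = g ^ N_count U t xs"
  by (induction t) (simp_all add: discount_Suc N_count_Suc, simp add: N_count_def)

lemma N_count_le_step_count:
  assumes "\<forall>t<n. xs !! t \<notin> B"
  shows "of_nat (N_count (A \<union> B) n xs) \<le> step_count A B xs"
proof -
  define T where "T = {i. (\<forall>j\<le>i. xs !! j \<notin> B) \<and> xs !! i \<in> A}"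
  have "{i. i < n \<and> xs !! i \<in> A \<union> B} \<subseteq> T"
    using assms by (auto simp: T_def)
  then have "finite T \<Longrightarrow> N_count (A \<union> B) n xs \<le> card T"
    unfolding N_count_def using card_mono by blast
  then show ?thesis
    by (simp add: step_count_def T_def[symmetric] Let_def)
qed

context
  fixes g rB rAB :: real and A B :: "'x set"
  assumes g: "0 < g" "g < 1" and r: "0 \<le> rB" "0 \<le> rAB"
begin

private abbreviation "d xs \<equiv> discount g (A \<union> B) xs"
private abbreviation "f xs t \<equiv> d xs t * streett_reward rB rAB A B (xs !! t)"

lemma discount_nonneg: "0 \<le> d xs t"
  using g by (simp add: discount_eq_power_N_count)

lemma sum_discount_indicator:
  "(\<Sum>t<n. d xs t * indicator (A \<union> B) (xs !! t)) = (1 - d xs n) / (1 - g)"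
proof (induction n)
  case (Suc n)
  have "(\<Sum>t<Suc n. d xs t * indicator (A \<union> B) (xs !! t)) =
      (1 - d xs n) / (1 - g) + d xs n * indicator (A \<union> B) (xs !! n)"
    by (simp only: sum.lessThan_Suc Suc.IH)
  also have "\<dots> = (1 - d xs (Suc n)) / (1 - g)"
    using g by (simp add: discount_Suc indicator_def field_simps)
  finally show ?case .
qed simp

lemma streett_return_partial_sum:
  "(\<Sum>t<n. f xs t) + rAB / (1 - g) =
     (rB + rAB) * (\<Sum>t<n. d xs t * indicator B (xs !! t)) + rAB * d xs n / (1 - g)"
proof (induction n)
  case (Suc n)
  have "(\<Sum>t<Suc n. f xs t) + rAB / (1 - g) = (\<Sum>t<n. f xs t) + rAB / (1 - g) + f xs n"
    by simp
  also have "\<dots> = (rB + rAB) * (\<Sum>t<Suc n. d xs t * indicator B (xs !! t))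
      + rAB * d xs (Suc n) / (1 - g)"
    using g unfolding Suc.IH
    by (simp add: discount_Suc streett_reward_def indicator_def field_simps)
  finally show ?case .
qed simp

lemma summable_streett_return: "summable (f xs)"
proof -
  have bound: "(\<Sum>t<n. d xs t * indicator (A \<union> B) (xs !! t)) \<le> 1 / (1 - g)" for n
    using g discount_nonneg[of xs n]
    unfolding sum_discount_indicator by (simp add: divide_right_mono)
  have "summable (\<lambda>t. d xs t * indicator (A \<union> B) (xs !! t))"
    by (rule summableI_nonneg_bounded[OF _ bound]) (simp add: discount_nonneg)
  then have summable_U: "summable (\<lambda>t. (rB + rAB) * (d xs t * indicator (A \<union> B) (xs !! t)))"
    by (rule summable_mult)
  have "norm (f xs t) \<le> (rB + rAB) * (d xs t * indicator (A \<union> B) (xs !! t))" for t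
  proof -
    have "0 \<le> d xs t * rB" "0 \<le> d xs t * rAB"
      using r discount_nonneg[of xs t] by simp_all
    then show ?thesis
      by (cases "xs !! t \<in> B"; cases "xs !! t \<in> A") (simp_all add: streett_reward_def distrib_right mult.commute)
  qed
  then show ?thesis
    by (rule summable_comparison_test'[OF summable_U])
qed

lemma streett_return_partial_sums:
  "(\<lambda>n. \<Sum>t<n. f xs t) \<longlonglongrightarrow> streett_return g rB rAB A B xs"
  unfolding streett_return_def by (rule summable_LIMSEQ[OF summable_streett_return])

lemma streett_return_lower_bound: "- rAB / (1 - g) \<le> streett_return g rB rAB A B xs"
proof (rule LIMSEQ_le_const[OF streett_return_partial_sums], intro exI allI impI)
  fix n
  have "0 \<le> (rB + rAB) * (\<Sum>t<n. d xs t * indicator B (xs !! t)) + rAB * d xs n / (1 - g)"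
    using g r discount_nonneg by (simp add: sum_nonneg)
  then show "- rAB / (1 - g) \<le> (\<Sum>t<n. f xs t)"
    using streett_return_partial_sum[where n=n and xs=xs] by simp
qed

lemma streett_return_upper_bound: "streett_return g rB rAB A B xs \<le> rB / (1 - g)"
proof (rule LIMSEQ_le_const2[OF streett_return_partial_sums], intro exI allI impI)
  fix n
  have "f xs t \<le> rB * (d xs t * indicator (A \<union> B) (xs !! t))" for t
  proof -
    have "0 \<le> d xs t * rB" "0 \<le> d xs t * rAB"
      using r discount_nonneg[of xs t] by simp_all
    then show ?thesis
      by (cases "xs !! t \<in> B"; cases "xs !! t \<in> A") (simp_all add: streett_reward_def mult.commute)
  qed
  then have "(\<Sum>t<n. f xs t) \<le> (\<Sum>t<n. rB * (d xs t * indicator (A \<union> B) (xs !! t)))"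
    by (rule sum_mono)
  also have "\<dots> = rB * (1 - d xs n) / (1 - g)"
    by (simp add: sum_distrib_left[symmetric] sum_discount_indicator)
  also have "\<dots> \<le> rB / (1 - g)"
    using g r discount_nonneg[of xs n] by (simp add: divide_right_mono mult_left_le)
  finally show "(\<Sum>t<n. f xs t) \<le> rB / (1 - g)" .
qed

lemma streett_return_unfold:
  "streett_return g rB rAB A B xs =
     streett_reward rB rAB A B (shd xs) + (if shd xs \<in> A \<union> B then g else 1) * streett_return g rB rAB A B (stl xs)"
proof -
  have "streett_return g rB rAB A B xs = f xs 0 + (\<Sum>t. f xs (Suc t))"
    using suminf_split_head[OF summable_streett_return, of xs] by (simp add: streett_return_def)
  also have "(\<Sum>t. f xs (Suc t)) = (\<Sum>t. (if shd xs \<in> A \<union> B then g else 1) * f (stl xs) t)"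
    by (simp add: discount_Suc_stl mult.assoc)
  also have "\<dots> = (if shd xs \<in> A \<union> B then g else 1) * streett_return g rB rAB A B (stl xs)"
    unfolding streett_return_def by (rule suminf_mult[OF summable_streett_return])
  finally show ?thesis
    by simp
qed

lemma abs_streett_return_le: "\<bar>streett_return g rB rAB A B xs\<bar> \<le> (rB + rAB) / (1 - g)"
proof -
  have "0 \<le> rB / (1 - g)" "0 \<le> rAB / (1 - g)"
    using g r by simp_all
  then show ?thesis
    using streett_return_lower_bound[of xs] streett_return_upper_bound[of xs]
    by (simp add: abs_le_iff add_divide_distrib)
qed

lemma discount_ge_power_step_count:
  assumes "\<forall>t<n. xs !! t \<notin> B" and "step_count A B xs < of_nat N"
  shows "g ^ N \<le> d xs n"
proof -
  have "of_nat (N_count (A \<union> B) n xs) < (of_nat N :: ennreal)"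
    using N_count_le_step_count[OF assms(1)] assms(2) by (rule le_less_trans)
  then have "N_count (A \<union> B) n xs \<le> N"
    by simp
  then show ?thesis
    unfolding discount_eq_power_N_count using g by (intro power_decreasing) auto
qed

(* Either B is reached before n with discount at least g^N, or the discount stays
   above g^N up to n. *)
lemma streett_return_partial_sum_step_count_bound:
  assumes "step_count A B xs < of_nat N"
  shows "rAB * g ^ N \<le> (\<Sum>t<n. f xs t) + rAB / (1 - g)"
proof -
  have tail: "0 \<le> rAB * d xs n / (1 - g)" and ind_B: "0 \<le> (\<Sum>t<n. d xs t * indicator B (xs !! t))"
    using g r discount_nonneg by (simp_all add: sum_nonneg)
  have "rAB * g ^ N \<le> (rB + rAB) * (\<Sum>t<n. d xs t * indicator B (xs !! t)) + rAB * d xs n / (1 - g)"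
  proof (cases "\<exists>t<n. xs !! t \<in> B")
    case True
    define \<tau> where "\<tau> = (LEAST t. xs !! t \<in> B)"
    have \<tau>: "xs !! \<tau> \<in> B" "\<tau> < n" "\<forall>t<\<tau>. xs !! t \<notin> B"
      using True LeastI_ex[of "\<lambda>t. xs !! t \<in> B"] Least_le[of "\<lambda>t. xs !! t \<in> B"]
        not_less_Least[of _ "\<lambda>t. xs !! t \<in> B"]
      unfolding \<tau>_def by (blast, fastforce, blast)
    have "rAB * g ^ N \<le> (rB + rAB) * d xs \<tau>"
      using mult_left_mono[OF discount_ge_power_step_count[OF \<tau>(3) assms] r(2)]
        mult_nonneg_nonneg[OF r(1) discount_nonneg[of xs \<tau>]]
      by (simp add: distrib_right)
    also have "\<dots> \<le> (rB + rAB) * (\<Sum>t<n. d xs t * indicator B (xs !! t))"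
    proof -
      have "d xs \<tau> * indicator B (xs !! \<tau>) \<le> (\<Sum>t<n. d xs t * indicator B (xs !! t))"
        by (rule member_le_sum) (use \<tau> discount_nonneg in auto)
      then show ?thesis
        using \<tau>(1) r by (intro mult_left_mono) auto
    qed
    finally show ?thesis
      using tail by linarith
  next
    case False
    then have "rAB * g ^ N \<le> rAB * d xs n"
      using discount_ge_power_step_count[OF _ assms] r by (simp add: mult_left_mono)
    also have "\<dots> \<le> rAB * d xs n / (1 - g)"
      using g r discount_nonneg[of xs n] by (simp add: le_divide_eq mult_left_le)
    finally show ?thesis
      using ind_B r by (simp add: add_increasing)
  qed
  then show ?thesis
    by (simp only: streett_return_partial_sum)
qed

lemma streett_return_step_count_bound:
  assumes "step_count A B xs < of_nat N"
  shows "rAB * g ^ N \<le> streett_return g rB rAB A B xs + rAB / (1 - g)"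
  using streett_return_partial_sum_step_count_bound[OF assms]
  by (intro LIMSEQ_le_const[OF tendsto_add[OF streett_return_partial_sums tendsto_const]]) auto

end

section \<open>Processes driven by a stationary policy\<close>

lemma St_in_space: "\<omega> \<in> space (stream_space (X \<Otimes>\<^sub>M AM)) \<Longrightarrow> St t \<omega> \<in> space X"
  by (auto simp: St_def space_stream_space space_pair_measure dest!: snth_in[of _ _ t])

lemma St_measurable [measurable]: "St t \<in> stream_space (X \<Otimes>\<^sub>M AM) \<rightarrow>\<^sub>M X"
  unfolding St_def[abs_def] by measurable

lemma St_Suc_Stream [simp]: "St (Suc t) (y ## \<omega>) = St t \<omega>"
  by (simp add: St_def)

locale stationary_process =
  fixes X :: "'x measure" and AM :: "'a measure"
    and K :: "'x \<times> 'a \<Rightarrow> 'x measure" and pol :: "'x \<Rightarrow> 'a measure"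
    and Pr :: "'x \<Rightarrow> ('x \<times> 'a) stream measure"
  assumes law: "process_law X AM K pol Pr"
    and pol_measurable [measurable]: "pol \<in> X \<rightarrow>\<^sub>M prob_algebra AM"
    and K_measurable [measurable]: "K \<in> X \<Otimes>\<^sub>M AM \<rightarrow>\<^sub>M prob_algebra X"
begin

abbreviation paths :: "('x \<times> 'a) stream measure" where
  "paths \<equiv> stream_space (X \<Otimes>\<^sub>M AM)"

lemma Pr_measurable [measurable]: "Pr \<in> X \<rightarrow>\<^sub>M prob_algebra paths"
  using law by (simp add: process_law_def)

lemma
  assumes "x \<in> space X"
  shows prob_space_Pr: "prob_space (Pr x)"
    and sets_Pr: "sets (Pr x) = sets paths"
    and space_Pr: "space (Pr x) = space paths"
proof -
  have "Pr x \<in> space (prob_algebra paths)"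
    using measurable_space[OF Pr_measurable assms] .
  then show "prob_space (Pr x)" and sets: "sets (Pr x) = sets paths"
    by (auto simp: space_prob_algebra)
  show "space (Pr x) = space paths"
    by (rule sets_eq_imp_space_eq[OF sets])
qed

lemma emeasure_Pr_space: "x \<in> space X \<Longrightarrow> emeasure (Pr x) (space paths) = 1"
  using prob_space.emeasure_space_1[OF prob_space_Pr] by (simp add: space_Pr)

lemma
  assumes "x \<in> space X" and "a \<in> space AM"
  shows prob_space_K: "prob_space (K (x, a))"
    and sets_K: "sets (K (x, a)) = sets X"
  using measurable_space[OF K_measurable, of "(x, a)"] assms
  by (auto simp: space_prob_algebra space_pair_measure)

lemma
  assumes "x \<in> space X"
  shows prob_space_pol: "prob_space (pol x)"
    and sets_pol: "sets (pol x) = sets AM"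
  using measurable_space[OF pol_measurable assms] by (auto simp: space_prob_algebra)

lemma integrable_Pr_bounded:
  fixes G :: "('x \<times> 'a) stream \<Rightarrow> real"
  assumes x: "x \<in> space X" and G: "G \<in> borel_measurable paths"
    and bounded: "\<And>\<omega>. \<omega> \<in> space paths \<Longrightarrow> \<bar>G \<omega>\<bar> \<le> D"
  shows "integrable (Pr x) G"
proof -
  interpret prob_space "Pr x"
    by (rule prob_space_Pr[OF x])
  show ?thesis
    using x G bounded
    by (intro integrable_const_bound[where B=D]) (auto simp: sets_Pr space_Pr cong: measurable_cong_sets)
qed

lemma nn_integral_Pr:
  assumes x: "x \<in> space X" and F [measurable]: "F \<in> borel_measurable paths"
  shows "(\<integral>\<^sup>+\<omega>. F \<omega> \<partial>Pr x) =
    (\<integral>\<^sup>+a. (\<integral>\<^sup>+x'. (\<integral>\<^sup>+\<omega>. F ((x, a) ## \<omega>) \<partial>Pr x') \<partial>K (x, a)) \<partial>pol x)"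
proof -
  have "(\<integral>\<^sup>+\<omega>. F \<omega> \<partial>Pr x) =
      (\<integral>\<^sup>+a. (\<integral>\<^sup>+\<omega>. F \<omega> \<partial>(K (x, a) \<bind> (\<lambda>x'. distr (Pr x') paths (\<lambda>\<omega>. (x, a) ## \<omega>)))) \<partial>pol x)"
    using law x unfolding process_law_def
    by (auto intro!: nn_integral_bind[OF F] measurable_prob_algebraD simp: sets_pol cong: measurable_cong_sets)
  also have "\<dots> = (\<integral>\<^sup>+a. (\<integral>\<^sup>+x'. (\<integral>\<^sup>+\<omega>. F ((x, a) ## \<omega>) \<partial>Pr x') \<partial>K (x, a)) \<partial>pol x)"
  proof (intro nn_integral_cong)
    fix a assume "a \<in> space (pol x)"
    then have a: "a \<in> space AM"
      using sets_eq_imp_space_eq[OF sets_pol[OF x]] by simp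
    have "(\<integral>\<^sup>+\<omega>. F \<omega> \<partial>(K (x, a) \<bind> (\<lambda>x'. distr (Pr x') paths (\<lambda>\<omega>. (x, a) ## \<omega>)))) =
        (\<integral>\<^sup>+x'. (\<integral>\<^sup>+\<omega>. F \<omega> \<partial>distr (Pr x') paths (\<lambda>\<omega>. (x, a) ## \<omega>)) \<partial>K (x, a))"
      using x a
      by (auto intro!: nn_integral_bind[OF F] measurable_prob_algebraD simp: sets_K cong: measurable_cong_sets)
    also have "\<dots> = (\<integral>\<^sup>+x'. (\<integral>\<^sup>+\<omega>. F ((x, a) ## \<omega>) \<partial>Pr x') \<partial>K (x, a))"
    proof (intro nn_integral_cong)
      fix x' assume "x' \<in> space (K (x, a))"
      then have "x' \<in> space X"
        using sets_eq_imp_space_eq[OF sets_K[OF x a]] by simp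
      then show "(\<integral>\<^sup>+\<omega>. F \<omega> \<partial>distr (Pr x') paths (\<lambda>\<omega>. (x, a) ## \<omega>)) = (\<integral>\<^sup>+\<omega>. F ((x, a) ## \<omega>) \<partial>Pr x')"
        using x a by (intro nn_integral_distr) (auto simp: sets_Pr cong: measurable_cong_sets)
    qed
    finally show "(\<integral>\<^sup>+\<omega>. F \<omega> \<partial>(K (x, a) \<bind> (\<lambda>x'. distr (Pr x') paths (\<lambda>\<omega>. (x, a) ## \<omega>)))) =
        (\<integral>\<^sup>+x'. (\<integral>\<^sup>+\<omega>. F ((x, a) ## \<omega>) \<partial>Pr x') \<partial>K (x, a))" .
  qed
  finally show ?thesis .
qed

lemma nn_integral_St0:
  assumes x: "x \<in> space X" and h [measurable]: "h \<in> borel_measurable X"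
  shows "(\<integral>\<^sup>+\<omega>. h (St 0 \<omega>) \<partial>Pr x) = h x"
proof -
  have "(\<integral>\<^sup>+\<omega>. h (St 0 \<omega>) \<partial>Pr x) =
      (\<integral>\<^sup>+a. (\<integral>\<^sup>+x'. (\<integral>\<^sup>+\<omega>. h x \<partial>Pr x') \<partial>K (x, a)) \<partial>pol x)"
    by (simp add: nn_integral_Pr[OF x] St_def)
  also have "\<dots> = (\<integral>\<^sup>+a. (\<integral>\<^sup>+x'. h x \<partial>K (x, a)) \<partial>pol x)"
  proof (intro nn_integral_cong)
    fix a x' assume "a \<in> space (pol x)" and "x' \<in> space (K (x, a))"
    then have "x' \<in> space X"
      using x sets_eq_imp_space_eq[OF sets_pol] sets_eq_imp_space_eq[OF sets_K] by auto
    then show "(\<integral>\<^sup>+\<omega>. h x \<partial>Pr x') = h x"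
      using prob_space_Pr by (simp add: prob_space.emeasure_space_1)
  qed
  also have "\<dots> = (\<integral>\<^sup>+a. h x \<partial>pol x)"
  proof (intro nn_integral_cong)
    fix a assume "a \<in> space (pol x)"
    then show "(\<integral>\<^sup>+x'. h x \<partial>K (x, a)) = h x"
      using x prob_space_K sets_eq_imp_space_eq[OF sets_pol] by (simp add: prob_space.emeasure_space_1)
  qed
  also have "\<dots> = h x"
    using x prob_space_pol by (simp add: prob_space.emeasure_space_1)
  finally show ?thesis .
qed

lemma AE_St0:
  assumes x: "x \<in> space X" and P [measurable]: "Measurable.pred X P" and "P x"
  shows "AE \<omega> in Pr x. P (St 0 \<omega>)"
proof -
  have "(\<integral>\<^sup>+\<omega>. indicator {y \<in> space X. \<not> P y} (St 0 \<omega>) \<partial>Pr x) = 0"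
    using nn_integral_St0[OF x, of "indicator {y \<in> space X. \<not> P y}"] \<open>P x\<close> by simp
  then have "AE \<omega> in Pr x. indicator {y \<in> space X. \<not> P y} (St 0 \<omega>) = (0 :: ennreal)"
    using x by (subst (asm) nn_integral_0_iff_AE) (auto simp: sets_Pr cong: measurable_cong_sets)
  moreover have "AE \<omega> in Pr x. St 0 \<omega> \<in> space X"
    using x by (intro AE_I2) (simp add: space_Pr St_in_space)
  ultimately show ?thesis
    by eventually_elim (auto split: split_indicator_asm)
qed

lemma nn_integral_stl:
  assumes x: "x \<in> space X" and F [measurable]: "F \<in> borel_measurable paths"
  shows "(\<integral>\<^sup>+\<omega>. F (stl \<omega>) \<partial>Pr x) = (\<integral>\<^sup>+\<omega>. (\<integral>\<^sup>+\<omega>'. F \<omega>' \<partial>Pr (St 1 \<omega>)) \<partial>Pr x)"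
proof -
  have [measurable]: "(\<lambda>y. \<integral>\<^sup>+\<omega>'. F \<omega>' \<partial>Pr y) \<in> borel_measurable X"
    by (rule measurable_compose[OF measurable_prob_algebraD[OF Pr_measurable]
          nn_integral_measurable_subprob_algebra[OF F]])
  have "(\<integral>\<^sup>+\<omega>. F (stl \<omega>) \<partial>Pr x) =
      (\<integral>\<^sup>+a. (\<integral>\<^sup>+x'. (\<integral>\<^sup>+\<omega>'. F \<omega>' \<partial>Pr x') \<partial>K (x, a)) \<partial>pol x)"
    by (simp add: nn_integral_Pr[OF x])
  also have "\<dots> = (\<integral>\<^sup>+a. (\<integral>\<^sup>+x'. (\<integral>\<^sup>+\<omega>. (\<integral>\<^sup>+\<omega>'. F \<omega>' \<partial>Pr (St 0 \<omega>)) \<partial>Pr x') \<partial>K (x, a)) \<partial>pol x)"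
  proof (rule nn_integral_cong, rule nn_integral_cong)
    fix a x' assume "a \<in> space (pol x)" and "x' \<in> space (K (x, a))"
    then have "x' \<in> space X"
      using x sets_eq_imp_space_eq[OF sets_pol] sets_eq_imp_space_eq[OF sets_K] by auto
    then show "(\<integral>\<^sup>+\<omega>'. F \<omega>' \<partial>Pr x') = (\<integral>\<^sup>+\<omega>. (\<integral>\<^sup>+\<omega>'. F \<omega>' \<partial>Pr (St 0 \<omega>)) \<partial>Pr x')"
      by (rule nn_integral_St0[symmetric]) measurable
  qed
  also have "\<dots> = (\<integral>\<^sup>+\<omega>. (\<integral>\<^sup>+\<omega>'. F \<omega>' \<partial>Pr (St 1 \<omega>)) \<partial>Pr x)"
    by (simp add: nn_integral_Pr[OF x])
  finally show ?thesis .
qed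

lemma distr_stl_Pr:
  assumes x: "x \<in> space X"
  shows "distr (Pr x) paths stl = Pr x \<bind> (\<lambda>\<omega>. Pr (St 1 \<omega>))"
proof (rule measure_eqI)
  have restart [measurable]: "(\<lambda>\<omega>. Pr (St 1 \<omega>)) \<in> Pr x \<rightarrow>\<^sub>M subprob_algebra paths"
    using x by (auto intro: measurable_prob_algebraD simp: sets_Pr cong: measurable_cong_sets)
  have "space (Pr x) \<noteq> {}"
    using prob_space_Pr[OF x] by (simp add: prob_space.not_empty)
  then show "sets (distr (Pr x) paths stl) = sets (Pr x \<bind> (\<lambda>\<omega>. Pr (St 1 \<omega>)))"
    by (subst sets_bind[where N=paths]) (auto simp: sets_Pr x space_Pr St_in_space)
  fix E assume "E \<in> sets (distr (Pr x) paths stl)"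
  then have E [measurable]: "E \<in> sets paths"
    by simp
  have "emeasure (distr (Pr x) paths stl) E = emeasure (Pr x) (stl -` E \<inter> space (Pr x))"
    using x by (intro emeasure_distr) (auto simp: sets_Pr cong: measurable_cong_sets)
  also have "\<dots> = (\<integral>\<^sup>+\<omega>. indicator (stl -` E \<inter> space paths) \<omega> \<partial>Pr x)"
    using x measurable_sets[OF measurable_stl E] by (simp add: space_Pr sets_Pr)
  also have "\<dots> = (\<integral>\<^sup>+\<omega>. indicator E (stl \<omega>) \<partial>Pr x)"
    using x by (intro nn_integral_cong) (auto simp: space_Pr split: split_indicator)
  also have "\<dots> = (\<integral>\<^sup>+\<omega>. emeasure (Pr (St 1 \<omega>)) E \<partial>Pr x)"
    using x by (auto simp: nn_integral_stl space_Pr sets_Pr St_in_space intro!: nn_integral_cong)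
  also have "\<dots> = emeasure (Pr x \<bind> (\<lambda>\<omega>. Pr (St 1 \<omega>))) E"
    using \<open>space (Pr x) \<noteq> {}\<close> by (rule emeasure_bind[OF _ restart E, symmetric])
  finally show "emeasure (distr (Pr x) paths stl) E = emeasure (Pr x \<bind> (\<lambda>\<omega>. Pr (St 1 \<omega>))) E" .
qed

lemma integral_stl:
  fixes G :: "('x \<times> 'a) stream \<Rightarrow> real"
  assumes x: "x \<in> space X" and G [measurable]: "G \<in> borel_measurable paths"
    and bounded: "\<And>\<omega>. \<omega> \<in> space paths \<Longrightarrow> \<bar>G \<omega>\<bar> \<le> D"
  shows "(\<integral>\<omega>. G (stl \<omega>) \<partial>Pr x) = (\<integral>\<omega>. (\<integral>\<omega>'. G \<omega>' \<partial>Pr (St 1 \<omega>)) \<partial>Pr x)"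
proof -
  have "(\<integral>\<omega>. G (stl \<omega>) \<partial>Pr x) = (\<integral>\<omega>. G \<omega> \<partial>distr (Pr x) paths stl)"
    using x by (subst integral_distr) (auto simp: sets_Pr cong: measurable_cong_sets)
  also have "\<dots> = (\<integral>\<omega>. (\<integral>\<omega>'. G \<omega>' \<partial>Pr (St 1 \<omega>)) \<partial>Pr x)"
    unfolding distr_stl_Pr[OF x]
  proof (rule integral_bind[OF G bounded])
    show "(\<lambda>\<omega>. Pr (St 1 \<omega>)) \<in> Pr x \<rightarrow>\<^sub>M subprob_algebra paths"
      using x by (auto intro: measurable_prob_algebraD simp: sets_Pr cong: measurable_cong_sets)
    show "finite_measure (Pr x)"
      using prob_space_Pr[OF x] by (simp add: prob_space_def)
    show "AE \<omega> in Pr x. emeasure (Pr (St 1 \<omega>)) (space (Pr (St 1 \<omega>))) \<le> ennreal 1"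
      using x by (intro AE_I2) (simp add: space_Pr St_in_space emeasure_Pr_space)
  qed
  finally show ?thesis .
qed

end

section \<open>The value function of the Streett reward\<close>

locale streett_value = stationary_process X AM K pol Pr
  for X :: "'x measure" and AM :: "'a measure" and K pol Pr +
  fixes A B :: "'x set" and g rB rAB :: real
    and Gam :: "'x \<Rightarrow> real" and r :: "'x \<Rightarrow> 'a \<Rightarrow> 'x \<Rightarrow> real"
  assumes A_sets [measurable]: "A \<in> sets X" and B_sets [measurable]: "B \<in> sets X"
    and g: "0 < g" "g < 1" and rewards_pos: "0 \<le> rB" "0 < rAB"
    and Gam: "\<And>y. y \<in> space X \<Longrightarrow> Gam y = (if y \<in> A \<union> B then g else 1)"
    and r: "\<And>y a y'. r y a y' = streett_reward rB rAB A B y"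
begin

abbreviation path_return :: "('x \<times> 'a) stream \<Rightarrow> real" where
  "path_return \<omega> \<equiv> streett_return g rB rAB A B (smap fst \<omega>)"

lemma path_return_bounds:
  "- rAB / (1 - g) \<le> path_return \<omega>" "path_return \<omega> \<le> rB / (1 - g)"
  "\<bar>path_return \<omega>\<bar> \<le> (rB + rAB) / (1 - g)"
  using g rewards_pos
  by (intro streett_return_lower_bound streett_return_upper_bound abs_streett_return_le; simp)+

lemma path_return_eq:
  "path_return \<omega> = (\<Sum>t. (\<Prod>i<t. if St i \<omega> \<in> A \<union> B then g else 1) * streett_reward rB rAB A B (St t \<omega>))"
  by (simp add: streett_return_def discount_def St_def)

lemma path_return_measurable [measurable]: "path_return \<in> borel_measurable paths"
  unfolding path_return_eq streett_reward_def by measurable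

lemma path_return_unfold:
  "path_return \<omega> = streett_reward rB rAB A B (St 0 \<omega>)
     + (if St 0 \<omega> \<in> A \<union> B then g else 1) * path_return (stl \<omega>)"
  using g rewards_pos streett_return_unfold[of g rB rAB A B "smap fst \<omega>"]
  by (simp add: St_def)

lemma integrable_path_return: "x \<in> space X \<Longrightarrow> integrable (Pr x) path_return"
  using path_return_bounds(3) by (intro integrable_Pr_bounded) auto

lemma value_fun_eq_integral_return:
  assumes "y \<in> space X"
  shows "value_fun Pr Gam r y = (\<integral>\<omega>. path_return \<omega> \<partial>Pr y)"
  unfolding value_fun_def path_return_eq
  using assms by (intro Bochner_Integration.integral_cong) (simp_all add: space_Pr St_in_space Gam r)

lemma value_fun_measurable [measurable]: "value_fun Pr Gam r \<in> borel_measurable X"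
proof -
  have "(\<lambda>y. \<integral>\<omega>. path_return \<omega> \<partial>Pr y) \<in> borel_measurable X"
    by (rule measurable_compose[OF measurable_prob_algebraD[OF Pr_measurable]
          integral_measurable_subprob_algebra[OF path_return_measurable]])
  then show ?thesis
    by (rule measurable_cong[THEN iffD1, rotated]) (simp add: value_fun_eq_integral_return)
qed

lemma value_fun_bounds:
  assumes x: "x \<in> space X"
  shows "- rAB / (1 - g) \<le> value_fun Pr Gam r x" "value_fun Pr Gam r x \<le> rB / (1 - g)"
proof -
  interpret prob_space "Pr x"
    by (rule prob_space_Pr[OF x])
  show "- rAB / (1 - g) \<le> value_fun Pr Gam r x"
    unfolding value_fun_eq_integral_return[OF x]
    by (intro integral_ge_const integrable_path_return[OF x] AE_I2 path_return_bounds)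
  show "value_fun Pr Gam r x \<le> rB / (1 - g)"
    unfolding value_fun_eq_integral_return[OF x]
    by (intro integral_le_const integrable_path_return[OF x] AE_I2 path_return_bounds)
qed

lemma abs_value_fun_le:
  assumes "y \<in> space X"
  shows "\<bar>value_fun Pr Gam r y\<bar> \<le> (rB + rAB) / (1 - g)"
proof -
  have "0 \<le> rB / (1 - g)" "0 \<le> rAB / (1 - g)"
    using g rewards_pos by simp_all
  then show ?thesis
    using value_fun_bounds[OF assms] by (simp add: abs_le_iff add_divide_distrib)
qed

lemma bellman_equation:
  assumes x: "x \<in> space X"
  shows "value_fun Pr Gam r x = streett_reward rB rAB A B x + Gam x * (\<integral>\<omega>. value_fun Pr Gam r (St 1 \<omega>) \<partial>Pr x)"
proof -
  interpret prob_space "Pr x"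
    by (rule prob_space_Pr[OF x])
  have "AE \<omega> in Pr x. streett_reward rB rAB A B (St 0 \<omega>) = streett_reward rB rAB A B x
      \<and> (St 0 \<omega> \<in> A \<union> B \<longleftrightarrow> x \<in> A \<union> B)"
    using x by (intro AE_St0) (auto simp: streett_reward_def)
  then have "AE \<omega> in Pr x. path_return \<omega> = streett_reward rB rAB A B x + Gam x * path_return (stl \<omega>)"
    by eventually_elim (use x in \<open>subst path_return_unfold, simp add: Gam\<close>)
  then have "value_fun Pr Gam r x = (\<integral>\<omega>. streett_reward rB rAB A B x + Gam x * path_return (stl \<omega>) \<partial>Pr x)"
    unfolding value_fun_eq_integral_return[OF x]
    using x by (intro integral_cong_AE) (auto simp: sets_Pr cong: measurable_cong_sets)
  also have "\<dots> = streett_reward rB rAB A B x + Gam x * (\<integral>\<omega>. path_return (stl \<omega>) \<partial>Pr x)"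
  proof -
    have "integrable (Pr x) (\<lambda>\<omega>. path_return (stl \<omega>))"
      using x path_return_bounds(3) by (intro integrable_Pr_bounded) auto
    then show ?thesis
      by (simp add: prob_space)
  qed
  also have "(\<integral>\<omega>. path_return (stl \<omega>) \<partial>Pr x) = (\<integral>\<omega>. value_fun Pr Gam r (St 1 \<omega>) \<partial>Pr x)"
    using x path_return_bounds(3)
    by (subst integral_stl) (auto simp: space_Pr St_in_space value_fun_eq_integral_return
        intro!: Bochner_Integration.integral_cong)
  finally show ?thesis .
qed

(* Markov's inequality: paths whose return is that low visit A at least N times before B. *)
lemma prob_low_return_le:
  assumes x: "x \<in> space X" and N: "0 < N" and "0 \<le> H"
    and steps: "(\<integral>\<^sup>+\<omega>. step_count A B (smap fst \<omega>) \<partial>Pr x) \<le> ennreal H"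
  shows "measure (Pr x) {\<omega> \<in> space paths. path_return \<omega> + rAB / (1 - g) < rAB * g ^ N} \<le> H / N"
proof -
  define E where "E = {\<omega> \<in> space paths. path_return \<omega> + rAB / (1 - g) < rAB * g ^ N}"
  have E_sets [measurable]: "E \<in> sets paths"
    unfolding E_def by measurable
  have "of_nat N * emeasure (Pr x) E = (\<integral>\<^sup>+\<omega>. of_nat N * indicator E \<omega> \<partial>Pr x)"
    using x by (simp add: nn_integral_cmult_indicator sets_Pr)
  also have "\<dots> \<le> (\<integral>\<^sup>+\<omega>. step_count A B (smap fst \<omega>) \<partial>Pr x)"
    using g rewards_pos streett_return_step_count_bound[of g rB rAB A B "smap fst _" N]
    by (intro nn_integral_mono) (fastforce simp: E_def indicator_def not_less[symmetric])
  also have "\<dots> \<le> ennreal H"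
    by (rule steps)
  finally have "real N * measure (Pr x) E \<le> H"
    using \<open>0 \<le> H\<close> x prob_space_Pr
    by (simp add: finite_measure.emeasure_eq_measure prob_space_def ennreal_of_nat_eq_real_of_nat
        ennreal_mult'[symmetric] sets_Pr)
  then show ?thesis
    using N by (simp add: E_def field_simps)
qed

lemma value_fun_lower_bound:
  assumes x: "x \<in> space X" and N: "0 < N" and "0 \<le> H"
    and steps: "(\<integral>\<^sup>+\<omega>. step_count A B (smap fst \<omega>) \<partial>Pr x) \<le> ennreal H"
  shows "rAB * g ^ N * (1 - H / N) \<le> value_fun Pr Gam r x + rAB / (1 - g)"
proof -
  interpret prob_space "Pr x"
    by (rule prob_space_Pr[OF x])
  define E where "E = {\<omega> \<in> space paths. path_return \<omega> + rAB / (1 - g) < rAB * g ^ N}"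
  have E_sets [measurable]: "E \<in> sets paths"
    unfolding E_def by measurable
  have "prob (space paths - E) = 1 - prob E"
    using x prob_compl[of E] by (simp add: space_Pr sets_Pr)
  then have "rAB * g ^ N * (1 - H / N) \<le> rAB * g ^ N * prob (space paths - E)"
    using prob_low_return_le[OF assms] g rewards_pos by (intro mult_left_mono) (auto simp: E_def)
  also have "\<dots> = (\<integral>\<omega>. rAB * g ^ N * indicator (space paths - E) \<omega> \<partial>Pr x)"
    using x by (simp add: sets_Pr less_top[symmetric])
  also have "\<dots> \<le> (\<integral>\<omega>. path_return \<omega> + rAB / (1 - g) \<partial>Pr x)"
  proof (rule integral_mono)
    show "integrable (Pr x) (\<lambda>\<omega>. rAB * g ^ N * indicator (space paths - E) \<omega>)"
      using x by (intro integrable_mult_right integrable_real_indicator) (auto simp: sets_Pr less_top[symmetric])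
    show "integrable (Pr x) (\<lambda>\<omega>. path_return \<omega> + rAB / (1 - g))"
      using x by (intro Bochner_Integration.integrable_add integrable_path_return) auto
    fix \<omega> assume "\<omega> \<in> space (Pr x)"
    then show "rAB * g ^ N * indicator (space paths - E) \<omega> \<le> path_return \<omega> + rAB / (1 - g)"
      using x path_return_bounds(1)[of \<omega>] g by (auto simp: E_def space_Pr indicator_def)
  qed
  also have "\<dots> = value_fun Pr Gam r x + rAB / (1 - g)"
    using x integrable_path_return by (simp add: value_fun_eq_integral_return prob_space)
  finally show ?thesis .
qed

lemma integrable_value_fun_St1:
  "x \<in> space X \<Longrightarrow> integrable (Pr x) (\<lambda>\<omega>. value_fun Pr Gam r (St 1 \<omega>))"
  using abs_value_fun_le[OF St_in_space]
  by (intro integrable_Pr_bounded[where D="(rB + rAB) / (1 - g)"]) auto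

lemma integral_value_fun_St1_le:
  "x \<in> space X \<Longrightarrow> (\<integral>\<omega>. value_fun Pr Gam r (St 1 \<omega>) \<partial>Pr x) \<le> rB / (1 - g)"
  using integrable_value_fun_St1 value_fun_bounds(2)[OF St_in_space] prob_space_Pr
  by (intro prob_space.integral_le_const AE_I2) (auto simp: space_Pr)

lemma nn_integral_value_fun_St1:
  assumes x: "x \<in> space X"
  shows "(\<integral>\<^sup>+\<omega>. ennreal (rB / (1 - g) - value_fun Pr Gam r (St 1 \<omega>)) \<partial>Pr x) =
    ennreal (rB / (1 - g) - (\<integral>\<omega>. value_fun Pr Gam r (St 1 \<omega>) \<partial>Pr x))"
proof -
  interpret prob_space "Pr x"
    by (rule prob_space_Pr[OF x])
  have "prob (space paths) = 1"
    using x prob_space by (simp add: space_Pr[symmetric])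
  then show ?thesis
    using x value_fun_bounds(2)[OF St_in_space] integrable_value_fun_St1[OF x]
    by (subst nn_integral_eq_integral) (auto simp: space_Pr intro!: AE_I2)
qed

lemma value_fun_uniform_lower_bound:
  assumes x: "x \<in> space X" and "0 \<le> H"
    and steps: "(\<integral>\<^sup>+\<omega>. step_count A B (smap fst \<omega>) \<partial>Pr x) \<le> ennreal H"
  shows "rAB * g ^ (nat \<lceil>2 * H\<rceil> + 1) / 2 \<le> value_fun Pr Gam r x + rAB / (1 - g)"
proof -
  define N where "N = nat \<lceil>2 * H\<rceil> + 1"
  have "0 < N" "2 * H \<le> real N"
    unfolding N_def using \<open>0 \<le> H\<close> by linarith+
  then have N: "0 < N" "H / N \<le> 1 / 2"
    by (simp_all add: field_simps)
  have "rAB * g ^ N / 2 = rAB * g ^ N * (1 - 1 / 2)"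
    by simp
  also have "\<dots> \<le> rAB * g ^ N * (1 - H / N)"
    using N g rewards_pos by (intro mult_left_mono) auto
  also have "\<dots> \<le> value_fun Pr Gam r x + rAB / (1 - g)"
    by (rule value_fun_lower_bound[OF x N(1) \<open>0 \<le> H\<close> steps])
  finally show ?thesis
    unfolding N_def .
qed

lemma integral_value_fun_St1_A_minus_B:
  assumes x: "x \<in> space X" "x \<in> A - B"
  shows "(\<integral>\<omega>. value_fun Pr Gam r (St 1 \<omega>) \<partial>Pr x) - value_fun Pr Gam r x =
    (1 - g) / g * (value_fun Pr Gam r x + rAB / (1 - g))"
  using bellman_equation[OF x(1)] x g by (simp add: Gam streett_reward_def field_simps)

lemma integral_value_fun_St1_outside:
  assumes "x \<in> space X" "x \<notin> A \<union> B"
  shows "(\<integral>\<omega>. value_fun Pr Gam r (St 1 \<omega>) \<partial>Pr x) = value_fun Pr Gam r x"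
  using bellman_equation[OF assms(1)] assms by (simp add: Gam streett_reward_def)

theorem streett_supermartingale_value_fun:
  assumes I: "I \<in> sets X" "absorbing X Pr I" "measure mu0 I = 1" and "0 \<le> H"
    and steps: "\<forall>x\<in>I. (\<integral>\<^sup>+\<omega>. step_count A B (smap fst \<omega>) \<partial>Pr x) \<le> ennreal H"
  shows "streett_supermartingale Pr mu0 A B I (\<lambda>x. rB / (1 - g) - value_fun Pr Gam r x)"
proof -
  let ?V = "value_fun Pr Gam r"
  have I_space: "x \<in> space X" if "x \<in> I" for x
    using sets.sets_into_space[OF I(1)] that by auto
  define \<epsilon> where "\<epsilon> = (1 - g) / g * (rAB * g ^ (nat \<lceil>2 * H\<rceil> + 1) / 2)"
  have "0 < \<epsilon>"
    using g rewards_pos by (simp add: \<epsilon>_def)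
  show ?thesis
    unfolding streett_supermartingale_def
  proof (intro conjI ballI exI[of _ \<epsilon>])
    fix x assume x: "x \<in> (A - B) \<inter> I"
    then have x_space: "x \<in> space X" and x_A_minus_B: "x \<in> A - B"
      using I_space by blast+
    have "\<epsilon> \<le> (\<integral>\<omega>. ?V (St 1 \<omega>) \<partial>Pr x) - ?V x"
      unfolding integral_value_fun_St1_A_minus_B[OF x_space x_A_minus_B] \<epsilon>_def
      using x x_space g steps \<open>0 \<le> H\<close> by (intro mult_left_mono value_fun_uniform_lower_bound) auto
    moreover have "ennreal (rB / (1 - g) - (\<integral>\<omega>. ?V (St 1 \<omega>) \<partial>Pr x)) + ennreal \<epsilon> =
        ennreal (rB / (1 - g) - (\<integral>\<omega>. ?V (St 1 \<omega>) \<partial>Pr x) + \<epsilon>)"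
      using \<open>0 < \<epsilon>\<close> integral_value_fun_St1_le[OF x_space] by (simp add: ennreal_plus)
    ultimately show "(\<integral>\<^sup>+\<omega>. ennreal (rB / (1 - g) - ?V (St 1 \<omega>)) \<partial>Pr x) + ennreal \<epsilon>
        \<le> ennreal (rB / (1 - g) - ?V x)"
      unfolding nn_integral_value_fun_St1[OF x_space] by (simp add: ennreal_leI)
  next
    fix x assume x: "x \<in> I - (A \<union> B)"
    then have x_space: "x \<in> space X" and x_outside: "x \<notin> A \<union> B"
      using I_space by blast+
    show "(\<integral>\<^sup>+\<omega>. ennreal (rB / (1 - g) - ?V (St 1 \<omega>)) \<partial>Pr x) \<le> ennreal (rB / (1 - g) - ?V x)"
      unfolding nn_integral_value_fun_St1[OF x_space] integral_value_fun_St1_outside[OF x_space x_outside] ..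
  qed (use I \<open>0 < \<epsilon>\<close> value_fun_bounds(2) I_space in \<open>auto simp: absorbing_def\<close>)
qed

end

section \<open>Product MDPs\<close>

lemma automaton_update_measurable:
  assumes L: "L \<in> SM \<rightarrow>\<^sub>M count_space (Pow AP)" and "finite Q"
    and delta: "\<And>q l. q \<in> Q \<Longrightarrow> l \<in> Pow AP \<Longrightarrow> delta q l \<in> Q"
  shows "(\<lambda>x. delta (snd x) (L (fst x))) \<in> prod_space SM Q \<rightarrow>\<^sub>M count_space Q"
  unfolding prod_space_def
proof (rule measurable_compose_countable'[where I=Q and g=snd])
  fix q assume "q \<in> Q"
  then have "delta q \<in> count_space (Pow AP) \<rightarrow>\<^sub>M count_space Q"
    using delta by auto
  then show "(\<lambda>x. delta q (L (fst x))) \<in> SM \<Otimes>\<^sub>M count_space Q \<rightarrow>\<^sub>M count_space Q"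
    using L by measurable
qed (use \<open>finite Q\<close> in \<open>auto simp: countable_finite\<close>)

lemma prod_kernel_measurable:
  assumes mdp: "labelled_mdp SM AM P mu AP L" and aut: "det_streett Q AP delta q0 Acc"
  shows "prod_kernel SM Q L delta P \<in> prod_space SM Q \<Otimes>\<^sub>M AM \<rightarrow>\<^sub>M prob_algebra (prod_space SM Q)"
proof -
  have [measurable]: "P \<in> SM \<Otimes>\<^sub>M AM \<rightarrow>\<^sub>M prob_algebra SM"
    using mdp by (simp add: labelled_mdp_def)
  have [measurable]: "(\<lambda>x. delta (snd x) (L (fst x))) \<in> SM \<Otimes>\<^sub>M count_space Q \<rightarrow>\<^sub>M count_space Q"
    using mdp aut automaton_update_measurable[of L SM AP Q delta]
    by (auto simp: labelled_mdp_def det_streett_def prod_space_def)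
  have "prod_kernel SM Q L delta P =
      (\<lambda>z. distr (P (fst (fst z), snd z)) (prod_space SM Q) (\<lambda>s'. (s', delta (snd (fst z)) (L (fst (fst z))))))"
    by (auto simp: prod_kernel_def fun_eq_iff split: prod.split)
  also have "\<dots> \<in> prod_space SM Q \<Otimes>\<^sub>M AM \<rightarrow>\<^sub>M prob_algebra (prod_space SM Q)"
    unfolding prod_space_def by (intro measurable_distr_prob_space2) measurable
  finally show ?thesis .
qed

theorem corollary3:
  fixes SM :: "'s measure" and AM :: "'act measure"
    and P :: "'s \<times> 'act \<Rightarrow> 's measure" and mu :: "'s measure"
    and AP :: "'ap set" and L :: "'s \<Rightarrow> 'ap set"
    and Q :: "'q set" and delta :: "'q \<Rightarrow> 'ap set \<Rightarrow> 'q" and q0 :: 'q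
    and Acc :: "('q set \<times> 'q set) set"
    and pol :: "'s \<times> 'q \<Rightarrow> 'act measure"
    and Pr :: "'s \<times> 'q \<Rightarrow> (('s \<times> 'q) \<times> 'act) stream measure"
    and gamma :: real and A B :: "'q set" and I :: "('s \<times> 'q) set"
    and Hbar rB rAB :: real
    and r :: "'s \<times> 'q \<Rightarrow> 'act \<Rightarrow> 's \<times> 'q \<Rightarrow> real"
    and Gam :: "'s \<times> 'q \<Rightarrow> real"
  assumes mdp: "labelled_mdp SM AM P mu AP L"
    and aut: "det_streett Q AP delta q0 Acc"
    and pol: "stationary_policy (prod_space SM Q) AM pol"
    and law: "process_law (prod_space SM Q) AM (prod_kernel SM Q L delta P) pol Pr"
    and gamma: "0 < gamma" "gamma < 1"
    and AB: "(A, B) \<in> Acc"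
    and I_meas: "I \<in> sets (prod_space SM Q)"
    and I_abs: "absorbing (prod_space SM Q) Pr I"
    and I_init: "measure (prod_init SM Q q0 mu) I = 1"
    and Hbar: "\<forall>x\<in>I. (\<integral>\<^sup>+\<omega>. step_count (space SM \<times> A) (space SM \<times> B) (smap fst \<omega>) \<partial>Pr x)
                 \<le> ennreal Hbar"
    and Hbar_nonneg: "0 \<le> Hbar"
    and rew: "\<forall>s q a x'. r (s, q) a x' =
                rB * indicator (space SM \<times> B) (s, q)
                - rAB * indicator ((space SM \<times> A) - (space SM \<times> B)) (s, q)"
    and rpos: "0 < rB" "0 < rAB"
    and ratio: "rB / rAB \<ge> 1 / (1 - gamma) * (1 / gamma powr (Hbar + 1) - 1)"
    and disc: "\<forall>s q. Gam (s, q) = (if q \<in> A \<union> B then gamma else 1)"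
  shows "streett_supermartingale Pr (prod_init SM Q q0 mu)
           (space SM \<times> A) (space SM \<times> B) I
           (\<lambda>x. rB / (1 - gamma) - value_fun Pr Gam r x)"
proof -
  have "A \<subseteq> Q" "B \<subseteq> Q"
    using aut AB by (auto simp: det_streett_def)
  then have sets: "space SM \<times> A \<in> sets (prod_space SM Q)" "space SM \<times> B \<in> sets (prod_space SM Q)"
    unfolding prod_space_def by (auto intro!: pair_measureI)
  interpret streett_value "prod_space SM Q" AM "prod_kernel SM Q L delta P" pol Pr
      "space SM \<times> A" "space SM \<times> B" gamma rB rAB Gam r
  proof unfold_locales
    show "pol \<in> prod_space SM Q \<rightarrow>\<^sub>M prob_algebra AM"
      using pol by (simp add: stationary_policy_def)
    show "\<And>y. y \<in> space (prod_space SM Q) \<Longrightarrow>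
        Gam y = (if y \<in> space SM \<times> A \<union> space SM \<times> B then gamma else 1)"
      using disc by (auto simp: prod_space_def space_pair_measure split: if_splits)
    show "\<And>y a y'. r y a y' = streett_reward rB rAB (space SM \<times> A) (space SM \<times> B) y"
      using rew by (auto simp: streett_reward_def)
  qed (use law prod_kernel_measurable[OF mdp aut] sets gamma rpos in auto)
  show ?thesis
    by (rule streett_supermartingale_value_fun[OF I_meas I_abs I_init Hbar_nonneg Hbar])
qed

end
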